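(* (1) $\mathcal{K}^{\mathsf{TJ}}(\overline{K_n})=\{k:k\ge2\}$ for $n\ge2$. (2) $\mathcal{K}^{\mathsf{TJ}}(\overline{K_{1,n}})=\{k:k\ge2\}$ for $n\ge1$. (3) $\mathcal{K}^{\mathsf{TJ}}(\overline{K_{m,n}})=\{k:k\ge2\}$ for $2\le m\le n$. (4) $\mathcal{K}^{\mathsf{TJ}}(\overline{B_p})=\{k:k\ge2\}$ for $p\ge1$. (5) $\mathcal{K}^{\mathsf{TJ}}(\overline{P_n})=\{k:k\ge2\}$ for $3\le n\le5$, and $=\varnothing$ for $n\ge6$. (6) $\mathcal{K}^{\mathsf{TJ}}(\overline{C_n})=\{k:k\ge2\}$ for $4\le n\le6$, and $=\varnothing$ for $n\ge7$. (7) $\mathcal{K}^{\mathsf{TJ}}(\overline{F_p})=\{k:k\ge2\}$ for $p\in\{1,2\}$, $\mathcal{K}^{\mathsf{TJ}}(\overline{F_3})=\{2\}$, and $\mathcal{K}^{\mathsf{TJ}}(\overline{F_p})=\varnothing$ for $p\ge4$.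
   Context: All graphs are finite, simple, undirected; $\overline{G}$ denotes the complement of $G$. A $k$-clique of a graph $H$ is a set of $k$ pairwise adjacent vertices. For a graph $H$ and integer $k\ge1$, the Token Jumping graph $\mathsf{TJ}_k(H)$ has as vertices the $k$-cliques of $H$, and two $k$-cliques $A,B$ are adjacent iff $|A\cap B|=k-1$. For a graph $G$, $\mathcal{K}^{\mathsf{TJ}}(G)=\{k\ge1:\ \exists H,\ \mathsf{TJ}_k(H)\cong G\}$. $K_n$, $P_n$, $C_n$ denote the complete graph, path, cycle on $n$ vertices; $K_{m,n}$ the complete bipartite graph. The book graph $B_p$ consists of $p$ triangles sharing a common edge; the friendship graph $F_p$ consists of $p$ triangles sharing a common vertex. *)

theory Defs
  imports Main
begin

type_synonym 'a graph = "'a set \<times> ('a \<Rightarrow> 'a \<Rightarrow> bool)"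

definition verts :: "'a graph \<Rightarrow> 'a set" where "verts G = fst G"
definition adj :: "'a graph \<Rightarrow> 'a \<Rightarrow> 'a \<Rightarrow> bool" where "adj G = snd G"

definition simple_graph :: "'a graph \<Rightarrow> bool" where
  "simple_graph G \<longleftrightarrow> finite (verts G)
     \<and> (\<forall>x y. adj G x y \<longrightarrow> x \<in> verts G \<and> y \<in> verts G)
     \<and> (\<forall>x y. adj G x y \<longrightarrow> adj G y x)
     \<and> (\<forall>x. \<not> adj G x x)"

definition graph_iso :: "'a graph \<Rightarrow> 'b graph \<Rightarrow> bool" where
  "graph_iso G G' \<longleftrightarrow> (\<exists>f. bij_betw f (verts G) (verts G')
     \<and> (\<forall>x\<in>verts G. \<forall>y\<in>verts G. adj G x y \<longleftrightarrow> adj G' (f x) (f y)))"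

definition compl_graph :: "'a graph \<Rightarrow> 'a graph" where
  "compl_graph G = (verts G, \<lambda>x y. x \<in> verts G \<and> y \<in> verts G \<and> x \<noteq> y \<and> \<not> adj G x y)"

definition clique :: "'a graph \<Rightarrow> nat \<Rightarrow> 'a set \<Rightarrow> bool" where
  "clique H k A \<longleftrightarrow> A \<subseteq> verts H \<and> card A = k \<and> finite A
     \<and> (\<forall>x\<in>A. \<forall>y\<in>A. x \<noteq> y \<longrightarrow> adj H x y)"

definition TJ :: "nat \<Rightarrow> 'a graph \<Rightarrow> 'a set graph" where
  "TJ k H = ({A. clique H k A},
     \<lambda>A B. clique H k A \<and> clique H k B \<and> card (A \<inter> B) = k - 1)"

text \<open>K^TJ(G) = {k \<ge> 1 | exists H with TJ_k(H) \<cong> G}.  H ranges over finite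
  simple graphs with vertices in nat (every finite graph is isomorphic to one).\<close>
definition K_TJ :: "'b graph \<Rightarrow> nat set" where
  "K_TJ G = {k. k \<ge> 1 \<and> (\<exists>H :: nat graph. simple_graph H \<and> graph_iso (TJ k H) G)}"

definition complete_graph :: "nat \<Rightarrow> nat graph" where
  "complete_graph n = ({0..<n}, \<lambda>x y. x < n \<and> y < n \<and> x \<noteq> y)"

definition complete_bipartite :: "nat \<Rightarrow> nat \<Rightarrow> nat graph" where
  "complete_bipartite m n = ({0..<m+n}, \<lambda>x y. x < m+n \<and> y < m+n \<and> (x < m \<longleftrightarrow> m \<le> y))"

definition path_graph :: "nat \<Rightarrow> nat graph" where
  "path_graph n = ({0..<n}, \<lambda>x y. x < n \<and> y < n \<and> (x = y + 1 \<or> y = x + 1))"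

definition cycle_graph :: "nat \<Rightarrow> nat graph" where
  "cycle_graph n = ({0..<n}, \<lambda>x y. x < n \<and> y < n \<and>
     (x = y + 1 \<or> y = x + 1 \<or> (x = 0 \<and> y = n - 1) \<or> (y = 0 \<and> x = n - 1)))"

text \<open>Book graph B_p: spine edge {0,1}, page vertices 2..p+1 adjacent to 0 and 1.\<close>
definition book_graph :: "nat \<Rightarrow> nat graph" where
  "book_graph p = ({0..<p+2}, \<lambda>x y. x < p+2 \<and> y < p+2 \<and> x \<noteq> y \<and> (x \<le> 1 \<or> y \<le> 1))"

text \<open>Friendship graph F_p: centre 0, triangles {0, 2i-1, 2i} for i = 1..p.\<close>
definition friendship_graph :: "nat \<Rightarrow> nat graph" where
  "friendship_graph p = ({0..<2*p+1}, \<lambda>x y. x < 2*p+1 \<and> y < 2*p+1 \<and> x \<noteq> y \<and>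
     (x = 0 \<or> y = 0 \<or> (x - 1) div 2 = (y - 1) div 2))"

end

theory Submission
  imports Defs
begin

(* Let g realise G as TJ_k(H) and let a, b be non-adjacent vertices of G.  Every common
   neighbour x of a and b is the clique (g a \<inter> g b) \<union> {p, q} for some p in g a - g b and
   q in g b - g a, and both differences have exactly two elements; two common neighbours are
   adjacent iff their coordinates (p, q) agree in exactly one place.  So the common
   neighbourhood of a non-adjacent pair is an induced subgraph of the 4-cycle K_2 x K_2: it
   has at most four vertices, and none of them has two non-neighbours in it.  This rules out
   the complements of F_p (p >= 4), P_n (n >= 6) and C_n (n >= 7).  For k >= 3 the union of
   two adjacent common neighbours is a (k + 1)-clique, and deleting a vertex of g a \<inter> g b
   from it yields a neighbour outside the common neighbourhood; in the complement of F_3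
   there is none, so only k = 2 survives there.

   Conversely, if G is the line graph of a graph R, then TJ_k of R joined with a complete
   graph on k - 2 new vertices is isomorphic to G whenever R is triangle-free or k = 2: its
   k-cliques are exactly the new vertices plus an edge of R.  The remaining complements are
   such line graphs (disjoint unions of cliques being line graphs of star forests), and k = 1
   is excluded because TJ_1(H) is complete. *)

lemma verts_TJ [simp]: "verts (TJ k H) = {A. clique H k A}"
  by (simp add: TJ_def verts_def)

lemma adj_TJ [simp]: "adj (TJ k H) A B \<longleftrightarrow> clique H k A \<and> clique H k B \<and> card (A \<inter> B) = k - 1"
  by (simp add: TJ_def adj_def)

lemma clique_iff_pairwise:
  "clique H k A \<longleftrightarrow> A \<subseteq> verts H \<and> finite A \<and> card A = k \<and> pairwise (adj H) A"
  by (auto simp: clique_def pairwise_def)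

lemma common_jump_neighbour_shape:
  assumes fin: "finite A" "finite B" "finite X"
    and card: "card A = k" "card B = k" "card X = k"
    and "A \<noteq> B" and AB: "card (A \<inter> B) \<noteq> k - 1"
    and XA: "card (X \<inter> A) = k - 1" and XB: "card (X \<inter> B) = k - 1"
  shows "card (A - B) = 2 \<and> card (B - A) = 2
    \<and> (\<exists>p\<in>A - B. \<exists>q\<in>B - A. X = A \<inter> B \<union> {p, q})"
proof -
  have "card (A \<inter> B) < k"
  proof (rule ccontr)
    assume "\<not> card (A \<inter> B) < k"
    with card fin have "card (A \<inter> B) = card A" "card (A \<inter> B) = card B"
      using card_mono[OF fin(1) Int_lower1[of A B]] by simp_all
    then have "A \<inter> B = A" "A \<inter> B = B"
      using card_subset_eq[OF fin(1) Int_lower1] card_subset_eq[OF fin(2) Int_lower2] by blast+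
    with \<open>A \<noteq> B\<close> show False by blast
  qed
  with AB have AB2: "card (A - B) \<ge> 2" "card (B - A) \<ge> 2"
    using card fin by (simp_all add: card_Diff_subset_Int Int_commute)
  have "card (A - X) = 1" "card (B - X) = 1" "card (X - A) = 1" "card (X - B) = 1"
    using fin card XA XB \<open>card (A \<inter> B) < k\<close>
    by (simp_all add: card_Diff_subset_Int Int_commute)
  then obtain r s p q where rs: "A - X = {r}" "B - X = {s}" and pq: "X - B = {p}" "X - A = {q}"
    by (elim card_1_singletonE)
  have "A - B = {r, p}"
    by (rule card_seteq) (use rs pq AB2 in \<open>auto simp: card_insert_if\<close>)
  have "B - A = {s, q}"
    by (rule card_seteq) (use rs pq AB2 in \<open>auto simp: card_insert_if\<close>)
  have "card (A - B) = 2" "card (B - A) = 2"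
    using \<open>A - B = {r, p}\<close> \<open>B - A = {s, q}\<close> AB2 by (auto simp: card_insert_if split: if_splits)
  moreover have "p \<in> A - B" "q \<in> B - A"
    using \<open>A - B = {r, p}\<close> \<open>B - A = {s, q}\<close> pq by blast+
  moreover have "X = A \<inter> B \<union> {p, q}"
  proof (intro equalityI)
    have "r \<notin> B" using \<open>A - B = {r, p}\<close> by blast
    with rs(1) have "A \<inter> B \<subseteq> X" by (metis Diff_iff IntD1 IntD2 singletonD subsetI)
    then show "A \<inter> B \<union> {p, q} \<subseteq> X" using pq by blast
    show "X \<subseteq> A \<inter> B \<union> {p, q}" using pq by blast
  qed
  ultimately show ?thesis by blast
qed

lemma card_Un_doubleton_Int_Un_doubleton:
  assumes "finite T" "p \<notin> T" "q \<notin> T" "p' \<notin> T" "q' \<notin> T"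
    and "p \<noteq> q" "p' \<noteq> q'" "p \<noteq> q'" "q \<noteq> p'"
  shows "card ((T \<union> {p, q}) \<inter> (T \<union> {p', q'}))
    = card T + (if p = p' then 1 else 0) + (if q = q' then 1 else 0)"
proof -
  have "(T \<union> {p, q}) \<inter> (T \<union> {p', q'})
      = T \<union> (if p = p' then {p} else {}) \<union> (if q = q' then {q} else {})"
    using assms by auto
  then show ?thesis
    using assms by (cases "p = p'"; cases "q = q'") simp_all
qed

lemma card_2_unique_other:
  "card S = 2 \<Longrightarrow> x \<in> S \<Longrightarrow> y \<in> S \<Longrightarrow> z \<in> S \<Longrightarrow> x \<noteq> y \<Longrightarrow> z \<noteq> y \<Longrightarrow> x = z"
  by (auto simp: card_2_iff)

lemma pairwise_Un_if_Diff_subset: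
  assumes "pairwise R C" "pairwise R D" "pairwise R E" "C - D \<subseteq> E" "D - C \<subseteq> E"
  shows "pairwise R (C \<union> D)"
proof (unfold pairwise_def, intro ballI impI)
  fix x y assume "x \<in> C \<union> D" "y \<in> C \<union> D" "x \<noteq> y"
  then have "{x, y} \<subseteq> C \<or> {x, y} \<subseteq> D \<or> {x, y} \<subseteq> E" using assms(4,5) by blast
  then show "R x y" using assms(1-3) \<open>x \<noteq> y\<close> by (meson insert_subset pairwiseD)
qed

locale TJ_realisation =
  fixes k :: nat and H :: "'a graph" and G :: "'b graph" and g :: "'b \<Rightarrow> 'a set"
  assumes bij: "bij_betw g (verts G) {A. clique H k A}"
    and adj_iff: "\<And>u v. u \<in> verts G \<Longrightarrow> v \<in> verts G \<Longrightarrow> adj G u v \<longleftrightarrow> card (g u \<inter> g v) = k - 1"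
begin

lemma clique: "u \<in> verts G \<Longrightarrow> clique H k (g u)"
  using bij by (auto simp: bij_betw_def)

lemma finite_card: "u \<in> verts G \<Longrightarrow> finite (g u) \<and> card (g u) = k"
  using clique by (simp add: clique_def)

lemma inj: "u \<in> verts G \<Longrightarrow> v \<in> verts G \<Longrightarrow> g u = g v \<longleftrightarrow> u = v"
  using bij by (auto simp: bij_betw_def inj_on_def)

lemma surj: "clique H k A \<Longrightarrow> \<exists>u\<in>verts G. g u = A"
  using bij_betw_imp_surj_on[OF bij] by (metis imageE mem_Collect_eq)

end

lemma graph_iso_TJ_iff: "graph_iso (TJ k H) G \<longleftrightarrow> (\<exists>g. TJ_realisation k H G g)"
proof
  assume "graph_iso (TJ k H) G"
  then obtain f where f: "bij_betw f {A. clique H k A} (verts G)"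
    and adj_f: "\<And>A B. clique H k A \<Longrightarrow> clique H k B \<Longrightarrow>
                  adj (TJ k H) A B \<longleftrightarrow> adj G (f A) (f B)"
    unfolding graph_iso_def by auto
  define g where "g = inv_into {A. clique H k A} f"
  have g: "bij_betw g (verts G) {A. clique H k A}"
    unfolding g_def by (rule bij_betw_inv_into[OF f])
  have "adj G u v \<longleftrightarrow> card (g u \<inter> g v) = k - 1" if "u \<in> verts G" "v \<in> verts G" for u v
    using adj_f bij_betwE[OF g] that bij_betw_inv_into_right[OF f] unfolding g_def by auto
  with g have "TJ_realisation k H G g" by unfold_locales
  then show "\<exists>g. TJ_realisation k H G g" by blast
next
  assume "\<exists>g. TJ_realisation k H G g"
  then obtain g where "TJ_realisation k H G g" ..
  then interpret TJ_realisation k H G g .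
  define f where "f = inv_into (verts G) g"
  have f: "bij_betw f {A. clique H k A} (verts G)"
    unfolding f_def by (rule bij_betw_inv_into[OF bij])
  have "adj (TJ k H) A B \<longleftrightarrow> adj G (f A) (f B)" if "clique H k A" "clique H k B" for A B
    using adj_iff bij_betwE[OF f] that bij_betw_inv_into_right[OF bij] unfolding f_def by auto
  with f show "graph_iso (TJ k H) G"
    unfolding graph_iso_def by auto
qed

lemma one_le_if_in_K_TJ: "k \<in> K_TJ G \<Longrightarrow> 1 \<le> k"
  by (simp add: K_TJ_def)

lemma one_notin_K_TJ:
  assumes "u \<in> verts G" "v \<in> verts G" "u \<noteq> v" "\<not> adj G u v"
  shows "1 \<notin> K_TJ G"
proof
  assume "1 \<in> K_TJ G"
  then obtain H :: "nat graph" and g where "TJ_realisation 1 H G g"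
    unfolding K_TJ_def graph_iso_TJ_iff by auto
  then interpret TJ_realisation 1 H G g .
  have "g u \<noteq> g v" "card (g u) = 1" "card (g v) = 1"
    using assms inj finite_card by auto
  then have "card (g u \<inter> g v) = 0"
    by (auto simp: card_1_singleton_iff)
  with adj_iff assms show False by simp
qed

locale TJ_realisation_non_adjacent = TJ_realisation +
  fixes a b
  assumes a: "a \<in> verts G" and b: "b \<in> verts G" and a_neq_b: "a \<noteq> b" and non_adj: "\<not> adj G a b"
begin

definition common_neighbour :: "'b \<Rightarrow> bool" where
  "common_neighbour x \<longleftrightarrow> x \<in> verts G \<and> adj G x a \<and> adj G x b"

lemma common_neighbour_shape:
  assumes "common_neighbour x"
  shows "card (g a - g b) = 2 \<and> card (g b - g a) = 2
    \<and> (\<exists>p\<in>g a - g b. \<exists>q\<in>g b - g a. g x = g a \<inter> g b \<union> {p, q})"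
proof (rule common_jump_neighbour_shape[where k = k])
  show "g a \<noteq> g b" using inj[OF a b] a_neq_b by simp
  show "card (g a \<inter> g b) \<noteq> k - 1" using adj_iff[OF a b] non_adj by simp
  from assms have x: "x \<in> verts G" "adj G x a" "adj G x b"
    unfolding common_neighbour_def by simp_all
  then show "card (g x \<inter> g a) = k - 1" "card (g x \<inter> g b) = k - 1"
    using adj_iff[OF x(1) a] adj_iff[OF x(1) b] by simp_all
  show "finite (g a)" "finite (g b)" "finite (g x)" "card (g a) = k" "card (g b) = k" "card (g x) = k"
    using finite_card a b assms unfolding common_neighbour_def by simp_all
qed

lemma card_Int_common_neighbour_sides:
  assumes "common_neighbour x"
  shows "card (g a \<inter> g b) + 2 = k"
proof -
  have "card (g a) = card (g a \<inter> g b) + card (g a - g b)"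
    using finite_card[OF a] by (metis card_Int_Diff)
  then show ?thesis
    using common_neighbour_shape[OF assms] finite_card[OF a] by simp
qed

(* Meaningful only for common neighbours, where both differences are singletons. *)
definition coord :: "'b \<Rightarrow> 'a \<times> 'a" where
  "coord x = (the_elem (g x - g b), the_elem (g x - g a))"

lemma coord_common_neighbour:
  assumes "common_neighbour x"
  shows "coord x \<in> (g a - g b) \<times> (g b - g a) \<and> g x = g a \<inter> g b \<union> {fst (coord x), snd (coord x)}"
proof -
  obtain p q where "p \<in> g a - g b" "q \<in> g b - g a" "g x = g a \<inter> g b \<union> {p, q}"
    using common_neighbour_shape[OF assms] by blast
  moreover from this have "g x - g b = {p}" "g x - g a = {q}" by auto
  ultimately show ?thesis unfolding coord_def by simp
qed

lemma card_Int_common_neighbours: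
  assumes "common_neighbour x" "common_neighbour y"
  shows "card (g x \<inter> g y) = card (g a \<inter> g b)
    + (if fst (coord x) = fst (coord y) then 1 else 0) + (if snd (coord x) = snd (coord y) then 1 else 0)"
proof -
  let ?T = "g a \<inter> g b"
  obtain p q p' q' where pq: "coord x = (p, q)" "coord y = (p', q')" by fastforce
  with coord_common_neighbour[OF assms(1)] coord_common_neighbour[OF assms(2)]
  have "p \<in> g a - g b" "q \<in> g b - g a" "p' \<in> g a - g b" "q' \<in> g b - g a"
    and gx: "g x = ?T \<union> {p, q}" and gy: "g y = ?T \<union> {p', q'}" by auto
  moreover have "finite ?T" using finite_card[OF a] by blast
  ultimately have "card ((?T \<union> {p, q}) \<inter> (?T \<union> {p', q'}))
      = card ?T + (if p = p' then 1 else 0) + (if q = q' then 1 else 0)"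
    by (intro card_Un_doubleton_Int_Un_doubleton) auto
  then show ?thesis by (simp add: pq gx gy)
qed

lemma coord_eq_iff:
  assumes "common_neighbour x" "common_neighbour y"
  shows "coord x = coord y \<longleftrightarrow> x = y"
proof
  assume "coord x = coord y"
  then have "g x = g y" using coord_common_neighbour[OF assms(1)] coord_common_neighbour[OF assms(2)] by metis
  moreover have "x \<in> verts G" "y \<in> verts G" using assms unfolding common_neighbour_def by simp_all
  ultimately show "x = y" using inj by simp
qed simp

lemma adj_common_neighbours_iff:
  assumes "common_neighbour x" "common_neighbour y" "x \<noteq> y"
  shows "adj G x y \<longleftrightarrow> fst (coord x) = fst (coord y) \<or> snd (coord x) = snd (coord y)"
proof -
  have "coord x \<noteq> coord y" using coord_eq_iff assms by blast
  moreover have "adj G x y \<longleftrightarrow> card (g x \<inter> g y) = k - 1"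
    using adj_iff assms unfolding common_neighbour_def by blast
  ultimately show ?thesis
    using card_Int_common_neighbours[OF assms(1,2)] card_Int_common_neighbour_sides[OF assms(1)]
    by (auto simp: prod_eq_iff)
qed

lemma card_le_4_if_common_neighbours:
  assumes "\<And>x. x \<in> X \<Longrightarrow> common_neighbour x"
  shows "card X \<le> 4"
proof (cases "X = {}")
  case False
  then obtain x where "common_neighbour x" using assms by blast
  have "card X \<le> card ((g a - g b) \<times> (g b - g a))"
  proof (rule card_inj_on_le)
    show "inj_on coord X" using coord_eq_iff assms by (meson inj_onI)
    show "coord ` X \<subseteq> (g a - g b) \<times> (g b - g a)" using coord_common_neighbour assms by blast
    show "finite ((g a - g b) \<times> (g b - g a))" using finite_card a b by blast
  qed
  also have "\<dots> = 4"
    using common_neighbour_shape[OF \<open>common_neighbour x\<close>] by (simp add: card_cartesian_product)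
  finally show ?thesis .
qed simp

lemma common_neighbour_unique_non_neighbour:
  assumes "common_neighbour x" "common_neighbour y" "common_neighbour z"
    and "x \<noteq> y" "z \<noteq> y" "\<not> adj G y x" "\<not> adj G y z"
  shows "x = z"
proof -
  have "fst (coord x) \<noteq> fst (coord y)" "snd (coord x) \<noteq> snd (coord y)"
    "fst (coord z) \<noteq> fst (coord y)" "snd (coord z) \<noteq> snd (coord y)"
    using adj_common_neighbours_iff[of y x] adj_common_neighbours_iff[of y z] assms by auto
  moreover have "card (g a - g b) = 2" "card (g b - g a) = 2"
    using common_neighbour_shape assms(1) by blast+
  ultimately have "fst (coord x) = fst (coord z)" "snd (coord x) = snd (coord z)"
    using coord_common_neighbour[OF assms(1)] coord_common_neighbour[OF assms(2)] coord_common_neighbour[OF assms(3)]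
    by (metis card_2_unique_other mem_Times_iff)+
  then have "coord x = coord z" by (simp add: prod_eq_iff)
  then show ?thesis using coord_eq_iff assms(1,3) by blast
qed

lemma pairwise_Un_adjacent_common_neighbours:
  assumes c: "common_neighbour c" and d: "common_neighbour d" and "adj G c d" "c \<noteq> d"
  shows "pairwise (adj H) (g c \<union> g d)"
proof -
  have V: "c \<in> verts G" "d \<in> verts G" using c d unfolding common_neighbour_def by simp_all
  obtain p q p' q' where pq: "coord c = (p, q)" "coord d = (p', q')" by fastforce
  with coord_common_neighbour[OF c] coord_common_neighbour[OF d]
  have sides: "p \<in> g a - g b" "q \<in> g b - g a" "p' \<in> g a - g b" "q' \<in> g b - g a"
    and gc: "g c = g a \<inter> g b \<union> {p, q}" and gd: "g d = g a \<inter> g b \<union> {p', q'}" by auto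
  have "p = p' \<or> q = q'"
    using adj_common_neighbours_iff[OF c d \<open>c \<noteq> d\<close>] \<open>adj G c d\<close> pq by simp
  then have "(g c - g d \<subseteq> g a \<and> g d - g c \<subseteq> g a) \<or> (g c - g d \<subseteq> g b \<and> g d - g c \<subseteq> g b)"
    unfolding gc gd using sides by blast
  then show ?thesis
    using pairwise_Un_if_Diff_subset clique[OF V(1)] clique[OF V(2)] clique[OF a] clique[OF b]
    unfolding clique_iff_pairwise by metis
qed

(* For k >= 3, removing a vertex of g a \<inter> g b from the (k + 1)-clique g c \<union> g d leaves a
   k-clique adjacent to c which misses g a \<inter> g b, so it is no common neighbour. *)
lemma common_neighbour_edge_has_outer_neighbour:
  assumes "k \<ge> 3" and c: "common_neighbour c" and d: "common_neighbour d" and "adj G c d"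
  shows "\<exists>w\<in>verts G. adj G w c \<and> w \<noteq> a \<and> w \<noteq> b \<and> \<not> common_neighbour w"
proof -
  let ?T = "g a \<inter> g b"
  have V: "c \<in> verts G" "d \<in> verts G" using c d unfolding common_neighbour_def by simp_all
  have cd: "card (g c \<inter> g d) = k - 1" using adj_iff[OF V] \<open>adj G c d\<close> by simp
  have "c \<noteq> d" using cd finite_card[OF V(1)] \<open>k \<ge> 3\<close> by auto
  have "pairwise (adj H) (g c \<union> g d)"
    using pairwise_Un_adjacent_common_neighbours[OF c d \<open>adj G c d\<close> \<open>c \<noteq> d\<close>] .
  have "finite (g c \<union> g d)" "g c \<union> g d \<subseteq> verts H"
    using clique[OF V(1)] clique[OF V(2)] unfolding clique_def by simp_all
  have "card (g c \<union> g d) = k + 1"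
    using card_Un_Int[of "g c" "g d"] finite_card[OF V(1)] finite_card[OF V(2)] cd \<open>k \<ge> 3\<close> by simp
  have "card ?T \<noteq> 0"
    using card_Int_common_neighbour_sides[OF c] \<open>k \<ge> 3\<close> by simp
  then obtain t where t: "t \<in> ?T" by (metis all_not_in_conv card.empty)
  have "t \<in> g c" using t coord_common_neighbour[OF c] by blast
  define W where "W = g c \<union> g d - {t}"
  have "W \<subseteq> g c \<union> g d" unfolding W_def by blast
  then have "pairwise (adj H) W" "W \<subseteq> verts H" "finite W"
    using \<open>pairwise (adj H) (g c \<union> g d)\<close> \<open>finite (g c \<union> g d)\<close> \<open>g c \<union> g d \<subseteq> verts H\<close>
    by (auto intro: pairwise_subset finite_subset)
  moreover have "card W = k"
    using \<open>card (g c \<union> g d) = k + 1\<close> \<open>finite (g c \<union> g d)\<close> \<open>t \<in> g c\<close>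
    unfolding W_def by (simp add: card_Diff_singleton)
  ultimately have "clique H k W" unfolding clique_iff_pairwise by blast
  then obtain w where w: "w \<in> verts G" "g w = W" using surj by blast
  have "g w \<inter> g c = g c - {t}" using w(2) unfolding W_def by blast
  then have "card (g w \<inter> g c) = k - 1"
    using finite_card[OF V(1)] \<open>t \<in> g c\<close> by (simp add: card_Diff_singleton)
  then have "adj G w c" using adj_iff[OF w(1) V(1)] by simp
  moreover have "t \<notin> g w" using w(2) unfolding W_def by blast
  then have "\<not> common_neighbour w" "w \<noteq> a" "w \<noteq> b"
    using coord_common_neighbour[of w] t by auto
  ultimately show ?thesis using w(1) by blast
qed

end

lemma K_TJ_eq_emptyI:
  assumes "a \<in> verts G" "b \<in> verts G" "a \<noteq> b" "\<not> adj G a b"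
    and "\<And>k (H :: nat graph) g. TJ_realisation_non_adjacent k H G g a b \<Longrightarrow> False"
  shows "K_TJ G = {}"
proof -
  have False if k: "k \<in> K_TJ G" for k
  proof -
    obtain H :: "nat graph" and g where "TJ_realisation k H G g"
      using k unfolding K_TJ_def graph_iso_TJ_iff by blast
    with assms show False
      by (meson TJ_realisation_non_adjacent.intro TJ_realisation_non_adjacent_axioms.intro)
  qed
  then show ?thesis by blast
qed

lemma K_TJ_empty_if_five_common_neighbours:
  assumes "a \<in> verts G" "b \<in> verts G" "a \<noteq> b" "\<not> adj G a b"
    and "X \<subseteq> verts G" "\<forall>x\<in>X. adj G x a \<and> adj G x b" "finite X" "card X \<ge> 5"
  shows "K_TJ G = {}"
proof (rule K_TJ_eq_emptyI[OF assms(1-4)])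
  fix k and H :: "nat graph" and g assume "TJ_realisation_non_adjacent k H G g a b"
  then interpret TJ_realisation_non_adjacent k H G g a b .
  have "card X \<le> 4"
    by (rule card_le_4_if_common_neighbours) (use assms(5,6) in \<open>auto simp: common_neighbour_def\<close>)
  with assms(8) show False by simp
qed

lemma K_TJ_empty_if_common_neighbour_with_two_non_neighbours:
  assumes "a \<in> verts G" "b \<in> verts G" "a \<noteq> b" "\<not> adj G a b"
    and "x \<in> verts G" "y \<in> verts G" "z \<in> verts G" "x \<noteq> y" "z \<noteq> y" "x \<noteq> z"
    and "\<forall>v\<in>{x, y, z}. adj G v a \<and> adj G v b" "\<not> adj G y x" "\<not> adj G y z"
  shows "K_TJ G = {}"
proof (rule K_TJ_eq_emptyI[OF assms(1-4)])
  fix k and H :: "nat graph" and g assume "TJ_realisation_non_adjacent k H G g a b"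
  then interpret TJ_realisation_non_adjacent k H G g a b .
  have "x = z"
    by (rule common_neighbour_unique_non_neighbour[of x y z])
      (use assms(5-13) in \<open>auto simp: common_neighbour_def\<close>)
  with \<open>x \<noteq> z\<close> show False ..
qed

lemma K_TJ_subset_atMost_2_if_closed_common_neighbourhood:
  assumes "a \<in> verts G" "b \<in> verts G" "a \<noteq> b" "\<not> adj G a b"
    and "c \<in> verts G" "d \<in> verts G" "\<forall>v\<in>{c, d}. adj G v a \<and> adj G v b" "adj G c d"
    and "\<forall>w\<in>verts G. adj G w c \<longrightarrow> w = a \<or> w = b \<or> adj G w a \<and> adj G w b"
  shows "K_TJ G \<subseteq> {..2}"
proof
  fix k assume "k \<in> K_TJ G"
  show "k \<in> {..2}"
  proof (rule ccontr)
    assume "k \<notin> {..2}"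
    obtain H :: "nat graph" and g where "TJ_realisation k H G g"
      using \<open>k \<in> K_TJ G\<close> unfolding K_TJ_def graph_iso_TJ_iff by blast
    with assms(1-4) interpret TJ_realisation_non_adjacent k H G g a b
      by (simp add: TJ_realisation_non_adjacent_def TJ_realisation_non_adjacent_axioms_def)
    have "\<exists>w\<in>verts G. adj G w c \<and> w \<noteq> a \<and> w \<noteq> b \<and> \<not> common_neighbour w"
      by (rule common_neighbour_edge_has_outer_neighbour)
        (use assms(5-8) \<open>k \<notin> {..2}\<close> in \<open>auto simp: common_neighbour_def\<close>)
    with assms(9) show False unfolding common_neighbour_def by blast
  qed
qed

definition join_complete :: "'a set set \<Rightarrow> 'a set \<Rightarrow> 'a graph" where
  "join_complete E S = (\<Union>E \<union> S, \<lambda>x y. x \<in> \<Union>E \<union> S \<and> y \<in> \<Union>E \<union> S \<and> x \<noteq> y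
     \<and> (x \<in> S \<or> y \<in> S \<or> {x, y} \<in> E))"

lemma verts_join_complete [simp]: "verts (join_complete E S) = \<Union>E \<union> S"
  by (simp add: join_complete_def verts_def)

lemma adj_join_complete [simp]:
  "adj (join_complete E S) x y \<longleftrightarrow> x \<in> \<Union>E \<union> S \<and> y \<in> \<Union>E \<union> S \<and> x \<noteq> y
     \<and> (x \<in> S \<or> y \<in> S \<or> {x, y} \<in> E)"
  by (simp add: join_complete_def adj_def)

lemma simple_graph_join_complete:
  "finite E \<Longrightarrow> \<forall>e\<in>E. finite e \<Longrightarrow> finite S \<Longrightarrow> simple_graph (join_complete E S)"
  by (auto simp: simple_graph_def insert_commute)

definition triangle_free :: "'a set set \<Rightarrow> bool" where
  "triangle_free E \<longleftrightarrow> \<not> (\<exists>x y z. {x, y} \<in> E \<and> {y, z} \<in> E \<and> {x, z} \<in> E)"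

lemma triangle_free_if_bipartite:
  fixes P :: "'a \<Rightarrow> bool"
  assumes "\<forall>e\<in>E. card e = 2" and "\<forall>e\<in>E. \<forall>x\<in>e. \<forall>y\<in>e. x \<noteq> y \<longrightarrow> P x \<noteq> P y"
  shows "triangle_free E"
proof -
  have P: "P x \<longleftrightarrow> \<not> P y" if "{x, y} \<in> E" for x y
  proof -
    have "x \<noteq> y" using assms(1) that by (cases "x = y") auto
    moreover have "\<forall>u\<in>{x, y}. \<forall>v\<in>{x, y}. u \<noteq> v \<longrightarrow> P u \<noteq> P v"
      using assms(2) that by (rule bspec)
    ultimately show ?thesis by (meson insertI1 insertI2 singletonI)
  qed
  show ?thesis
    unfolding triangle_free_def
  proof
    assume "\<exists>x y z. {x, y} \<in> E \<and> {y, z} \<in> E \<and> {x, z} \<in> E"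
    then obtain x y z where "{x, y} \<in> E" "{y, z} \<in> E" "{x, z} \<in> E" by blast
    with P[of x y] P[of y z] P[of x z] show False by simp
  qed
qed

lemma triangle_freeI:
  assumes "\<forall>e\<in>E. card e = 2"
    and "\<forall>e\<in>E. \<forall>e'\<in>E. e \<noteq> e' \<longrightarrow> e \<inter> e' \<noteq> {} \<longrightarrow> (e - e') \<union> (e' - e) \<notin> E"
  shows "triangle_free E"
  unfolding triangle_free_def
proof
  assume "\<exists>x y z. {x, y} \<in> E \<and> {y, z} \<in> E \<and> {x, z} \<in> E"
  then obtain x y z where xyz: "{x, y} \<in> E" "{y, z} \<in> E" "{x, z} \<in> E" by blast
  have "x \<noteq> y" using assms(1) xyz(1) by (cases "x = y") auto
  moreover have "y \<noteq> z" using assms(1) xyz(2) by (cases "y = z") auto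
  moreover have "x \<noteq> z" using assms(1) xyz(3) by (cases "x = z") auto
  ultimately have "{x, y} \<noteq> {y, z}" "{x, y} \<inter> {y, z} \<noteq> {}"
    and "({x, y} - {y, z}) \<union> ({y, z} - {x, y}) = {x, z}"
    by auto
  with bspec[OF bspec[OF assms(2) xyz(1)] xyz(2)] xyz(3) show False by simp
qed

lemma clique_join_complete_iff:
  assumes E: "\<forall>e\<in>E. card e = 2" and S: "finite S" "S \<inter> \<Union>E = {}"
    and tf: "S = {} \<or> triangle_free E"
  shows "clique (join_complete E S) (card S + 2) C \<longleftrightarrow> (\<exists>e\<in>E. C = S \<union> e)"
proof
  assume C: "clique (join_complete E S) (card S + 2) C"
  then have fin: "finite C" and card_C: "card C = card S + 2" by (simp_all add: clique_def)
  have edge: "{x, y} \<in> E" if "x \<in> C - S" "y \<in> C - S" "x \<noteq> y" for x y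
  proof -
    have "adj (join_complete E S) x y" using C that unfolding clique_def by blast
    then show ?thesis using that by simp
  qed
  have card_split: "card C = card (C \<inter> S) + card (C - S)"
    using fin by (metis card_Int_Diff)
  moreover have "card (C \<inter> S) \<le> card S" using S by (simp add: card_mono)
  moreover have "\<not> card (C - S) \<ge> 3"
  proof
    assume "card (C - S) \<ge> 3"
    then obtain D where "D \<subseteq> C - S" "card D = 3" by (meson obtain_subset_with_card_n)
    moreover from \<open>card D = 3\<close> obtain x y z where "D = {x, y, z}" "x \<noteq> y" "y \<noteq> z" "x \<noteq> z"
      unfolding card_3_iff by blast
    ultimately have "x \<in> C - S" "y \<in> C - S" "z \<in> C - S" "x \<noteq> y" "y \<noteq> z" "x \<noteq> z"
      by auto
    then have "{x, y} \<in> E" "{y, z} \<in> E" "{x, z} \<in> E" using edge by simp_all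
    moreover have "S \<noteq> {}" using \<open>card (C - S) \<ge> 3\<close> card_C by auto
    ultimately show False using tf unfolding triangle_free_def by blast
  qed
  ultimately have "card (C - S) = 2" "card (C \<inter> S) = card S" using card_C by linarith+
  then obtain x y where xy: "C - S = {x, y}" "x \<noteq> y" by (meson card_2_iff)
  have "C \<inter> S = S" using \<open>card (C \<inter> S) = card S\<close> S by (simp add: card_subset_eq)
  then have "C = S \<union> {x, y}" using xy by blast
  moreover have "{x, y} \<in> E" using edge xy by blast
  ultimately show "\<exists>e\<in>E. C = S \<union> e" by blast
next
  assume "\<exists>e\<in>E. C = S \<union> e"
  then obtain e where e: "e \<in> E" "C = S \<union> e" by blast
  then obtain x y where xy: "e = {x, y}" "x \<noteq> y" using E by (meson card_2_iff)
  have "S \<inter> e = {}" using S e by blast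
  then have "card C = card S + 2" using e xy S by (simp add: card_Un_disjoint)
  moreover have "pairwise (adj (join_complete E S)) C"
    using e xy by (auto simp: pairwise_def insert_commute)
  ultimately show "clique (join_complete E S) (card S + 2) C"
    unfolding clique_iff_pairwise using e xy S by auto
qed

definition line_graph_repr :: "'b graph \<Rightarrow> ('b \<Rightarrow> 'a set) \<Rightarrow> bool" where
  "line_graph_repr G \<phi> \<longleftrightarrow> inj_on \<phi> (verts G) \<and> (\<forall>v\<in>verts G. card (\<phi> v) = 2)
     \<and> (\<forall>u\<in>verts G. \<forall>v\<in>verts G. u \<noteq> v \<longrightarrow> (adj G u v \<longleftrightarrow> card (\<phi> u \<inter> \<phi> v) = 1))"

lemma TJ_realisation_join_complete:
  assumes G: "simple_graph G" and \<phi>: "line_graph_repr G \<phi>"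
    and S: "finite S" "S \<inter> \<Union>(\<phi> ` verts G) = {}"
    and tf: "S = {} \<or> triangle_free (\<phi> ` verts G)"
  shows "TJ_realisation (card S + 2) (join_complete (\<phi> ` verts G) S) G (\<lambda>v. S \<union> \<phi> v)"
proof
  let ?E = "\<phi> ` verts G"
  have two: "card (\<phi> v) = 2" "finite (\<phi> v)" if "v \<in> verts G" for v
    using \<phi> that unfolding line_graph_repr_def by (auto intro: card_ge_0_finite)
  have "inj_on (\<lambda>v. S \<union> \<phi> v) (verts G)"
  proof (rule inj_onI)
    fix u v assume uv: "u \<in> verts G" "v \<in> verts G" "S \<union> \<phi> u = S \<union> \<phi> v"
    then have "\<phi> u = \<phi> v" using S(2) by blast
    with uv show "u = v" using \<phi> unfolding line_graph_repr_def by (meson inj_onD)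
  qed
  moreover have "(\<lambda>v. S \<union> \<phi> v) ` verts G = {A. clique (join_complete ?E S) (card S + 2) A}"
    using clique_join_complete_iff[of ?E S] two S tf by auto
  ultimately show "bij_betw (\<lambda>v. S \<union> \<phi> v) (verts G) {A. clique (join_complete ?E S) (card S + 2) A}"
    unfolding bij_betw_def ..
  fix u v assume uv: "u \<in> verts G" "v \<in> verts G"
  have "(S \<union> \<phi> u) \<inter> (S \<union> \<phi> v) = S \<union> (\<phi> u \<inter> \<phi> v)" "S \<inter> (\<phi> u \<inter> \<phi> v) = {}"
    using S(2) uv by auto
  then have card_Int: "card ((S \<union> \<phi> u) \<inter> (S \<union> \<phi> v)) = card S + card (\<phi> u \<inter> \<phi> v)"
    using S(1) two(2)[OF uv(1)] by (simp add: card_Un_disjoint)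
  show "adj G u v \<longleftrightarrow> card ((S \<union> \<phi> u) \<inter> (S \<union> \<phi> v)) = card S + 2 - 1"
  proof (cases "u = v")
    case True
    then show ?thesis using G two[OF uv(1)] card_Int unfolding simple_graph_def by simp
  next
    case False
    then show ?thesis using \<phi> uv card_Int unfolding line_graph_repr_def by simp
  qed
qed

lemma in_K_TJ_if_line_graph:
  fixes \<phi> :: "'b \<Rightarrow> nat set"
  assumes G: "simple_graph G" and \<phi>: "line_graph_repr G \<phi>"
    and "k \<ge> 2" and "k = 2 \<or> triangle_free (\<phi> ` verts G)"
  shows "k \<in> K_TJ G"
proof -
  let ?E = "\<phi> ` verts G"
  have "finite e" if "e \<in> ?E" for e
    using \<phi> that card_ge_0_finite[of e] unfolding line_graph_repr_def by auto
  moreover have "finite ?E" using G unfolding simple_graph_def by simp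
  ultimately have "finite (\<Union>?E)" by blast
  define N where "N = Suc (Max (\<Union>?E))"
  define S where "S = {N..<N + (k - 2)}"
  have S: "finite S" "card S + 2 = k"
    using \<open>k \<ge> 2\<close> unfolding S_def by simp_all
  have "S \<inter> \<Union>?E = {}"
    using Max_ge[OF \<open>finite (\<Union>?E)\<close>] unfolding S_def N_def by fastforce
  have "S = {} \<or> triangle_free ?E" using assms(4) S by auto
  then have "TJ_realisation k (join_complete ?E S) G (\<lambda>v. S \<union> \<phi> v)"
    using TJ_realisation_join_complete[OF G \<phi> S(1) \<open>S \<inter> \<Union>?E = {}\<close>] S(2) by simp
  moreover have "simple_graph (join_complete ?E S)"
    using \<open>finite ?E\<close> \<open>\<And>e. e \<in> ?E \<Longrightarrow> finite e\<close> S(1) by (simp add: simple_graph_join_complete)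
  ultimately have "simple_graph (join_complete ?E S) \<and> graph_iso (TJ k (join_complete ?E S)) G"
    unfolding graph_iso_TJ_iff by blast
  moreover have "k \<ge> 1" using \<open>k \<ge> 2\<close> by simp
  ultimately show ?thesis unfolding K_TJ_def by blast
qed

lemma K_TJ_eq_if_line_graph:
  fixes \<phi> :: "'b \<Rightarrow> nat set"
  assumes "simple_graph G" "line_graph_repr G \<phi>" "triangle_free (\<phi> ` verts G)"
    and "u \<in> verts G" "v \<in> verts G" "u \<noteq> v" "\<not> adj G u v"
  shows "K_TJ G = {k. k \<ge> 2}"
proof (intro set_eqI iffI)
  fix k assume "k \<in> K_TJ G"
  moreover have "1 \<notin> K_TJ G" by (rule one_notin_K_TJ[OF assms(4-7)])
  ultimately show "k \<in> {k. k \<ge> 2}" using one_le_if_in_K_TJ[of k G] by (cases "k = 1") auto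
next
  fix k :: nat assume "k \<in> {k. k \<ge> 2}"
  then show "k \<in> K_TJ G" using in_K_TJ_if_line_graph[OF assms(1,2)] assms(3) by simp
qed

lemma line_graph_repr_nth:
  assumes "verts G = {0..<length xs}" "distinct xs" "\<forall>e\<in>set xs. card e = 2"
    and "\<forall>u<length xs. \<forall>v<length xs. u \<noteq> v \<longrightarrow> (adj G u v \<longleftrightarrow> card (xs ! u \<inter> xs ! v) = 1)"
  shows "line_graph_repr G ((!) xs)"
  using assms inj_on_nth[of xs "{0..<length xs}"] unfolding line_graph_repr_def by simp

lemma K_TJ_eq_if_line_graph_nth:
  fixes xs :: "nat set list"
  assumes "simple_graph G" "verts G = {0..<length xs}" "distinct xs" "\<forall>e\<in>set xs. card e = 2"
    and "\<forall>u<length xs. \<forall>v<length xs. u \<noteq> v \<longrightarrow> (adj G u v \<longleftrightarrow> card (xs ! u \<inter> xs ! v) = 1)"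
    and "triangle_free (set xs)"
    and "u \<in> verts G" "v \<in> verts G" "u \<noteq> v" "\<not> adj G u v"
  shows "K_TJ G = {k. k \<ge> 2}"
proof (rule K_TJ_eq_if_line_graph[OF assms(1) line_graph_repr_nth[OF assms(2-5)]])
  show "triangle_free ((!) xs ` verts G)" using assms(2,6) by (simp add: nth_image)
qed (use assms(7-10) in simp_all)

lemma line_graph_repr_disjoint_cliques:
  fixes c :: "'b \<Rightarrow> nat"
  assumes "finite (verts G)"
    and "\<forall>u\<in>verts G. \<forall>v\<in>verts G. u \<noteq> v \<longrightarrow> (adj G u v \<longleftrightarrow> c u = c v)"
  obtains \<phi> :: "'b \<Rightarrow> nat set" where "line_graph_repr G \<phi>" "triangle_free (\<phi> ` verts G)"
proof -
  obtain f :: "'b \<Rightarrow> nat" where f: "inj_on f (verts G)"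
    using finite_imp_inj_to_nat_seg[OF assms(1)] by blast
  define \<phi> where "\<phi> v = {2 * c v, 2 * f v + 1}" for v
  have odd_even: "2 * m \<noteq> 2 * n + 1" for m n :: nat by presburger
  have "inj_on \<phi> (verts G)"
  proof (rule inj_onI)
    fix u v assume "u \<in> verts G" "v \<in> verts G" "\<phi> u = \<phi> v"
    then have "2 * f u + 1 \<in> \<phi> v" unfolding \<phi>_def by blast
    then have "2 * f u + 1 = 2 * f v + 1"
      using odd_even[of "c v" "f u"] unfolding \<phi>_def by auto
    then have "f u = f v" by simp
    with f show "u = v" by (meson \<open>u \<in> verts G\<close> \<open>v \<in> verts G\<close> inj_onD)
  qed
  moreover have "card (\<phi> v) = 2" for v unfolding \<phi>_def using odd_even by simp
  moreover have "card (\<phi> u \<inter> \<phi> v) = (if c u = c v then 1 else 0)"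
    if "u \<in> verts G" "v \<in> verts G" "u \<noteq> v" for u v
  proof -
    have "f u \<noteq> f v" using f that by (meson inj_onD)
    then have "\<phi> u \<inter> \<phi> v = (if c u = c v then {2 * c u} else {})"
      unfolding \<phi>_def using odd_even by auto
    then show ?thesis by simp
  qed
  ultimately have "line_graph_repr G \<phi>"
    using assms(2) unfolding line_graph_repr_def by auto
  moreover have "triangle_free (\<phi> ` verts G)"
  proof (rule triangle_free_if_bipartite[where P = even])
    show "\<forall>e\<in>\<phi> ` verts G. card e = 2" using \<open>\<And>v. card (\<phi> v) = 2\<close> by blast
    show "\<forall>e\<in>\<phi> ` verts G. \<forall>x\<in>e. \<forall>y\<in>e. x \<noteq> y \<longrightarrow> even x \<noteq> even y"
      unfolding \<phi>_def by auto
  qed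
  ultimately show ?thesis by (rule that)
qed

lemma K_TJ_eq_if_disjoint_cliques:
  fixes c :: "'b \<Rightarrow> nat"
  assumes "simple_graph G"
    and "\<forall>u\<in>verts G. \<forall>v\<in>verts G. u \<noteq> v \<longrightarrow> (adj G u v \<longleftrightarrow> c u = c v)"
    and "u \<in> verts G" "v \<in> verts G" "u \<noteq> v" "\<not> adj G u v"
  shows "K_TJ G = {k. k \<ge> 2}"
proof -
  obtain \<phi> :: "'b \<Rightarrow> nat set" where "line_graph_repr G \<phi>" "triangle_free (\<phi> ` verts G)"
    using line_graph_repr_disjoint_cliques assms(1,2) unfolding simple_graph_def by blast
  then show ?thesis by (rule K_TJ_eq_if_line_graph[OF assms(1) _ _ assms(3-6)])
qed

lemma verts_compl_graph [simp]: "verts (compl_graph G) = verts G"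
  by (simp add: compl_graph_def verts_def)

lemma adj_compl_graph [simp]:
  "adj (compl_graph G) x y \<longleftrightarrow> x \<in> verts G \<and> y \<in> verts G \<and> x \<noteq> y \<and> \<not> adj G x y"
  by (simp add: compl_graph_def verts_def adj_def)

lemma simple_graph_compl_graph: "simple_graph G \<Longrightarrow> simple_graph (compl_graph G)"
  by (auto simp: simple_graph_def)

lemma verts_concrete_graphs [simp]:
  "verts (complete_graph n) = {0..<n}" "verts (complete_bipartite m n) = {0..<m+n}"
  "verts (path_graph n) = {0..<n}" "verts (cycle_graph n) = {0..<n}"
  "verts (book_graph p) = {0..<p+2}" "verts (friendship_graph p) = {0..<2*p+1}"
  by (simp_all add: verts_def complete_graph_def complete_bipartite_def path_graph_def
      cycle_graph_def book_graph_def friendship_graph_def)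

lemma adj_concrete_graphs [simp]:
  "adj (complete_graph n) x y \<longleftrightarrow> x < n \<and> y < n \<and> x \<noteq> y"
  "adj (complete_bipartite m n) x y \<longleftrightarrow> x < m+n \<and> y < m+n \<and> (x < m \<longleftrightarrow> m \<le> y)"
  "adj (path_graph n) x y \<longleftrightarrow> x < n \<and> y < n \<and> (x = y + 1 \<or> y = x + 1)"
  "adj (cycle_graph n) x y \<longleftrightarrow> x < n \<and> y < n \<and>
     (x = y + 1 \<or> y = x + 1 \<or> (x = 0 \<and> y = n - 1) \<or> (y = 0 \<and> x = n - 1))"
  "adj (book_graph p) x y \<longleftrightarrow> x < p+2 \<and> y < p+2 \<and> x \<noteq> y \<and> (x \<le> 1 \<or> y \<le> 1)"
  "adj (friendship_graph p) x y \<longleftrightarrow> x < 2*p+1 \<and> y < 2*p+1 \<and> x \<noteq> y \<and>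
     (x = 0 \<or> y = 0 \<or> (x - 1) div 2 = (y - 1) div 2)"
  by (simp_all add: adj_def complete_graph_def complete_bipartite_def path_graph_def
      cycle_graph_def book_graph_def friendship_graph_def)

lemma simple_concrete_graphs:
  "simple_graph (complete_graph n)" "simple_graph (complete_bipartite m n)"
  "simple_graph (path_graph n)" "simple_graph (book_graph p)" "simple_graph (friendship_graph p)"
  by (auto simp: simple_graph_def)

lemma simple_graph_cycle_graph: "n \<noteq> 1 \<Longrightarrow> simple_graph (cycle_graph n)"
  by (auto simp: simple_graph_def)

lemma K_TJ_compl_complete_graph:
  assumes "n \<ge> 2"
  shows "K_TJ (compl_graph (complete_graph n)) = {k. k \<ge> 2}"
  by (rule K_TJ_eq_if_disjoint_cliques[where c = id and u = 0 and v = 1])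
    (use assms in \<open>auto simp: simple_graph_compl_graph simple_concrete_graphs\<close>)

lemma K_TJ_compl_complete_bipartite:
  assumes "1 \<le> m" "1 \<le> n"
  shows "K_TJ (compl_graph (complete_bipartite m n)) = {k. k \<ge> 2}"
  by (rule K_TJ_eq_if_disjoint_cliques[where c = "\<lambda>x. if x < m then 0 else 1" and u = 0 and v = m])
    (use assms in \<open>auto simp: simple_graph_compl_graph simple_concrete_graphs\<close>)

lemma K_TJ_compl_book_graph:
  assumes "p \<ge> 1"
  shows "K_TJ (compl_graph (book_graph p)) = {k. k \<ge> 2}"
  by (rule K_TJ_eq_if_disjoint_cliques[where c = "\<lambda>x. if x \<le> 1 then x else 2" and u = 0 and v = 1])
    (use assms in \<open>auto simp: simple_graph_compl_graph simple_concrete_graphs\<close>)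

lemma K_TJ_compl_path_graph_3: "K_TJ (compl_graph (path_graph 3)) = {k. k \<ge> 2}"
  by (rule K_TJ_eq_if_disjoint_cliques[where c = "\<lambda>x. if x = 1 then 1 else 0" and u = 0 and v = 1])
    (auto simp: simple_graph_compl_graph simple_concrete_graphs eval_nat_numeral less_Suc_eq)

lemma K_TJ_compl_cycle_graph_4: "K_TJ (compl_graph (cycle_graph 4)) = {k. k \<ge> 2}"
  by (rule K_TJ_eq_if_disjoint_cliques[where c = "\<lambda>x. if x \<in> {0, 2} then 0 else 1" and u = 0 and v = 1])
    (auto simp: simple_graph_compl_graph simple_graph_cycle_graph eval_nat_numeral less_Suc_eq)

lemma K_TJ_compl_friendship_graph_1: "K_TJ (compl_graph (friendship_graph 1)) = {k. k \<ge> 2}"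
  by (rule K_TJ_eq_if_disjoint_cliques[where c = id and u = 0 and v = 1])
    (auto simp: simple_graph_compl_graph simple_concrete_graphs)

lemmas explicit_graph_simps = simple_graph_compl_graph eval_nat_numeral All_less_Suc
  doubleton_eq_iff Int_insert_left insert_Diff_if div_Suc mod_Suc

lemma K_TJ_compl_path_graph_4: "K_TJ (compl_graph (path_graph 4)) = {k. k \<ge> 2}"
  by (rule K_TJ_eq_if_line_graph_nth[where xs = "[{1, 2}, {3, 4}, {0, 1}, {2, 3}]" and u = 0 and v = 1];
      (intro triangle_freeI)?; simp add: simple_concrete_graphs explicit_graph_simps)

lemma K_TJ_compl_path_graph_5: "K_TJ (compl_graph (path_graph 5)) = {k. k \<ge> 2}"
  by (rule K_TJ_eq_if_line_graph_nth[where xs = "[{0, 1}, {4, 2}, {0, 3}, {1, 4}, {0, 2}]" and u = 0 and v = 1];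
      (intro triangle_freeI)?; simp add: simple_concrete_graphs explicit_graph_simps)

lemma K_TJ_compl_cycle_graph_5: "K_TJ (compl_graph (cycle_graph 5)) = {k. k \<ge> 2}"
  by (rule K_TJ_eq_if_line_graph_nth[where xs = "[{0, 1}, {3, 4}, {1, 2}, {4, 0}, {2, 3}]" and u = 0 and v = 1];
      (intro triangle_freeI)?; simp add: simple_graph_cycle_graph explicit_graph_simps)

lemma K_TJ_compl_cycle_graph_6: "K_TJ (compl_graph (cycle_graph 6)) = {k. k \<ge> 2}"
  by (rule K_TJ_eq_if_line_graph_nth[where xs = "[{0, 2}, {1, 4}, {0, 3}, {1, 2}, {0, 4}, {1, 3}]" and u = 0 and v = 1];
      (intro triangle_freeI)?; simp add: simple_graph_cycle_graph explicit_graph_simps)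

lemma K_TJ_compl_friendship_graph_2: "K_TJ (compl_graph (friendship_graph 2)) = {k. k \<ge> 2}"
  by (rule K_TJ_eq_if_line_graph_nth[where xs = "[{0, 1}, {2, 3}, {4, 5}, {3, 4}, {5, 2}]" and u = 0 and v = 1];
      (intro triangle_freeI)?; simp add: simple_concrete_graphs explicit_graph_simps)

lemma K_TJ_compl_friendship_graph_3: "K_TJ (compl_graph (friendship_graph 3)) = {2}"
proof -
  let ?G = "compl_graph (friendship_graph 3)"
  have two: "2 \<in> K_TJ ?G"
    by (rule in_K_TJ_if_line_graph[OF _ line_graph_repr_nth[where
          xs = "[{5, 6}, {1, 2}, {3, 4}, {1, 3}, {2, 4}, {1, 4}, {2, 3}]"]])
      (simp_all add: simple_concrete_graphs explicit_graph_simps)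
  have one: "1 \<notin> K_TJ ?G"
    by (rule one_notin_K_TJ[where u = 1 and v = 2]) auto
  have le_2: "K_TJ ?G \<subseteq> {..2}"
    by (rule K_TJ_subset_atMost_2_if_closed_common_neighbourhood[where a = 1 and b = 2 and c = 3 and d = 5])
      (auto simp: eval_nat_numeral less_Suc_eq div_Suc mod_Suc)
  show ?thesis
  proof (intro set_eqI iffI)
    fix k assume k: "k \<in> K_TJ ?G"
    then have "k \<le> 2" "k \<noteq> 1" "1 \<le> k" using le_2 one one_le_if_in_K_TJ[OF k] by auto
    then show "k \<in> {2}" by simp
  qed (use two in simp)
qed

lemma K_TJ_compl_path_graph_ge_6: "n \<ge> 6 \<Longrightarrow> K_TJ (compl_graph (path_graph n)) = {}"
  by (rule K_TJ_empty_if_common_neighbour_with_two_non_neighbours[where a = 0 and b = 1 and x = 3 and y = 4 and z = 5]) auto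

lemma K_TJ_compl_cycle_graph_ge_7: "n \<ge> 7 \<Longrightarrow> K_TJ (compl_graph (cycle_graph n)) = {}"
  by (rule K_TJ_empty_if_common_neighbour_with_two_non_neighbours[where a = 0 and b = 1 and x = 3 and y = 4 and z = 5]) auto

lemma K_TJ_compl_friendship_graph_ge_4: "p \<ge> 4 \<Longrightarrow> K_TJ (compl_graph (friendship_graph p)) = {}"
  by (rule K_TJ_empty_if_five_common_neighbours[where a = 1 and b = 2 and X = "{3, 4, 5, 6, 7}"]) auto

theorem theorem4p10:
  shows "(\<forall>n\<ge>2. K_TJ (compl_graph (complete_graph n)) = {k. k \<ge> 2})
    \<and> (\<forall>n\<ge>1. K_TJ (compl_graph (complete_bipartite 1 n)) = {k. k \<ge> 2})
    \<and> (\<forall>m n. 2 \<le> m \<and> m \<le> n \<longrightarrow> K_TJ (compl_graph (complete_bipartite m n)) = {k. k \<ge> 2})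
    \<and> (\<forall>p\<ge>1. K_TJ (compl_graph (book_graph p)) = {k. k \<ge> 2})
    \<and> (\<forall>n. 3 \<le> n \<and> n \<le> 5 \<longrightarrow> K_TJ (compl_graph (path_graph n)) = {k. k \<ge> 2})
    \<and> (\<forall>n\<ge>6. K_TJ (compl_graph (path_graph n)) = {})
    \<and> (\<forall>n. 4 \<le> n \<and> n \<le> 6 \<longrightarrow> K_TJ (compl_graph (cycle_graph n)) = {k. k \<ge> 2})
    \<and> (\<forall>n\<ge>7. K_TJ (compl_graph (cycle_graph n)) = {})
    \<and> (\<forall>p\<in>{1,2}. K_TJ (compl_graph (friendship_graph p)) = {k. k \<ge> 2})
    \<and> K_TJ (compl_graph (friendship_graph 3)) = {2}
    \<and> (\<forall>p\<ge>4. K_TJ (compl_graph (friendship_graph p)) = {})"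
proof (intro conjI allI impI ballI)
  fix n :: nat
  assume "3 \<le> n \<and> n \<le> 5"
  then have "n = 3 \<or> n = 4 \<or> n = 5" by arith
  then show "K_TJ (compl_graph (path_graph n)) = {k. k \<ge> 2}"
    using K_TJ_compl_path_graph_3 K_TJ_compl_path_graph_4 K_TJ_compl_path_graph_5 by blast
next
  fix n :: nat
  assume "4 \<le> n \<and> n \<le> 6"
  then have "n = 4 \<or> n = 5 \<or> n = 6" by arith
  then show "K_TJ (compl_graph (cycle_graph n)) = {k. k \<ge> 2}"
    using K_TJ_compl_cycle_graph_4 K_TJ_compl_cycle_graph_5 K_TJ_compl_cycle_graph_6 by blast
next
  fix p :: nat
  assume "p \<in> {1, 2}"
  then show "K_TJ (compl_graph (friendship_graph p)) = {k. k \<ge> 2}"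
    using K_TJ_compl_friendship_graph_1 K_TJ_compl_friendship_graph_2 by blast
qed (simp_all add: K_TJ_compl_complete_graph K_TJ_compl_complete_bipartite K_TJ_compl_book_graph
    K_TJ_compl_path_graph_ge_6 K_TJ_compl_cycle_graph_ge_7 K_TJ_compl_friendship_graph_3
    K_TJ_compl_friendship_graph_ge_4)

end
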